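(* Let $(n_k)_{k\ge0}$ be a strictly increasing sequence of positive integers such that $n_k$ divides $n_{k+1}$ for every $k\ge0$, and let $(a_k)_{k\ge0}$ be a sequence of positive real numbers decreasing to $0$ with $\sum_{k\ge0}a_k=+\infty$. Then there exists a continuous Borel probability measure $\sigma$ on $\mathbb{T}$ such that $|\hat\sigma(n_k)-1|\le a_k$ for every $k\ge0$.
   Context: $\hat\sigma(n)=\int_{\mathbb{T}}\lambda^n\,d\sigma(\lambda)$; continuous means atomless. *)

theory Defs
  imports "HOL-Probability.Probability"
begin

definition circleT :: "complex set" where
  "circleT = sphere 0 1"

definition borel_prob_on_T :: "complex measure \<Rightarrow> bool" where
  "borel_prob_on_T M \<longleftrightarrow> prob_space M \<and> sets M = sets borel \<and> emeasure M circleT = 1"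

text \<open>Continuous = atomless.\<close>
definition atomless :: "complex measure \<Rightarrow> bool" where
  "atomless M \<longleftrightarrow> (\<forall>x. emeasure M {x} = 0)"

definition fourier_coeff :: "complex measure \<Rightarrow> nat \<Rightarrow> complex" where
  "fourier_coeff M n = integral\<^sup>L M (\<lambda>z. z ^ n)"

end

theory Submission
  imports Defs
begin

text \<open>
  A probabilistic construction of a continuous measure whose Fourier coefficients
  at a lacunary divisibility chain \<open>n k\<close> are close to 1.  Flip independent coins
  \<open>\<omega> j\<close> with heads probability \<open>p j = min (1/2) (a j / 7)\<close> and let \<open>\<sigma>\<close> be the law of
  \<open>cis (2\<pi> \<Sum>j. \<omega> j / n j)\<close>.
  \<^item> Fourier side: \<open>n k / n i\<close> is an integer for \<open>i \<le> k\<close>, so only the tail \<open>j > k\<close> of the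
    phase matters in \<open>\<sigma>\<^sub>k = fourier_coeff \<sigma> (n k)\<close>, and
    \<open>\<bar>\<sigma>\<^sub>k - 1\<bar> \<le> 2\<pi> n k \<Sum>j>k. p j / n j \<le> 2\<pi> p k \<le> a k\<close>
    because \<open>n j \<ge> 2\<^sup>j\<^sup>-\<^sup>k n k\<close> and \<open>p\<close> decreases.
  \<^item> Atoms: the weights \<open>1 / n j\<close> at least halve, so distinct coin patterns on a finite
    set \<open>J \<subseteq> {1..}\<close> give phases that differ modulo 1; by independence of the coins on
    \<open>J\<close> from the rest, every atom has mass at most \<open>\<Prod>i\<in>J. 1 - p i\<close>, which tends to 0
    because \<open>\<Sum> p\<close> diverges along with \<open>\<Sum> a\<close>.
\<close>

lemma dvd_chain_dvd:
  fixes n :: "nat \<Rightarrow> nat"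
  assumes "\<And>k. n k dvd n (Suc k)" and "i \<le> j"
  shows "n i dvd n j"
  using assms(2)
proof (induction j rule: dec_induct)
  case (step m)
  then show ?case using assms(1) dvd_trans by blast
qed simp

text \<open>A strictly increasing divisibility chain of positive integers at least doubles
  at every step, hence grows geometrically.\<close>
lemma dvd_chain_geometric:
  fixes n :: "nat \<Rightarrow> nat"
  assumes mono: "strict_mono n" and dvd: "\<And>k. n k dvd n (Suc k)" and "i \<le> j"
  shows "2 ^ (j - i) * n i \<le> n j"
  using assms(3)
proof (induction j rule: dec_induct)
  case (step m)
  obtain q where q: "n (Suc m) = n m * q" using dvd by (meson dvdE)
  have "n m < n (Suc m)" using mono by (simp add: strict_mono_Suc_iff)
  then have "q \<noteq> 0" "q \<noteq> 1" using q by auto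
  then have "2 \<le> q" by linarith
  then have double: "2 * n m \<le> n (Suc m)" using q by (metis mult.commute mult_le_mono2)
  have "2 ^ (Suc m - i) * n i = 2 * (2 ^ (m - i) * n i)" using step(1) by (simp add: Suc_diff_le)
  also have "\<dots> \<le> 2 * n m" using step by simp
  finally show ?case using double by simp
qed simp

lemma dvd_chain_reciprocals:
  fixes n :: "nat \<Rightarrow> nat"
  assumes mono: "strict_mono n" and pos: "\<And>k. 0 < n k" and dvd: "\<And>k. n k dvd n (Suc k)"
  shows "0 < 1 / real (n j)"
    and "1 / real (n 0) \<le> 1"
    and "2 * (1 / real (n (Suc j))) \<le> 1 / real (n j)"
    and "i \<le> k \<Longrightarrow> real (n k) * (1 / real (n i)) \<in> \<int>"
    and "k \<le> j \<Longrightarrow> real (n k) * (1 / real (n j)) \<le> (1/2) ^ (j - k)"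
proof -
  show "0 < 1 / real (n j)" "1 / real (n 0) \<le> 1" using pos[of j] pos[of 0] by simp_all
  have "real (2 * n j) \<le> real (n (Suc j))"
    using dvd_chain_geometric[where n=n, OF mono dvd, of j "Suc j"] by simp
  then show "2 * (1 / real (n (Suc j))) \<le> 1 / real (n j)"
    using pos[of j] by (simp add: field_simps)
  show "real (n k) * (1 / real (n i)) \<in> \<int>" if ik: "i \<le> k"
  proof -
    obtain q where "n k = n i * q" using dvd_chain_dvd[where n=n, OF dvd ik] by (rule dvdE)
    then show ?thesis using pos[of i] by simp
  qed
  show "real (n k) * (1 / real (n j)) \<le> (1/2) ^ (j - k)" if "k \<le> j"
  proof -
    have "real (2 ^ (j - k) * n k) \<le> real (n j)"
      using dvd_chain_geometric[where n=n, OF mono dvd that] by (simp only: of_nat_le_iff)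
    then show ?thesis using pos[of j] by (simp add: field_simps)
  qed
qed

text \<open>This is what makes the finite binary digit patterns distinguishable modulo 1.\<close>
lemma halving_geometric:
  fixes d :: "nat \<Rightarrow> real"
  assumes halve: "\<And>j. 2 * d (Suc j) \<le> d j" and "m \<le> j"
  shows "d j \<le> d m * (1/2) ^ (j - m)"
  using assms(2)
proof (induction j rule: dec_induct)
  case (step j)
  have "d (Suc j) \<le> d j / 2" using halve[of j] by simp
  also have "\<dots> \<le> d m * (1/2) ^ (j - m) / 2" using step(3) by simp
  finally show ?case using step(1) by (simp add: Suc_diff_le)
qed simp

lemma halving_interval_sum:
  fixes d :: "nat \<Rightarrow> real"
  assumes halve: "\<And>j. 2 * d (Suc j) \<le> d j" and "m \<le> N"
  shows "(\<Sum>i\<in>{m<..N}. d i) \<le> d m * (1 - (1/2) ^ (N - m))"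
  using assms(2)
proof (induction N rule: dec_induct)
  case (step N)
  have "{m<..Suc N} = insert (Suc N) {m<..N}" using step(1) by auto
  then have "(\<Sum>i\<in>{m<..Suc N}. d i) = d (Suc N) + (\<Sum>i\<in>{m<..N}. d i)" by simp
  also have "\<dots> \<le> d m * (1/2) ^ (Suc N - m) + d m * (1 - (1/2) ^ (N - m))"
    using halving_geometric[where d=d, OF halve, of m "Suc N"] step by simp
  also have "(1/2::real) ^ (N - m) = 2 * (1/2) ^ (Suc N - m)" using step(1) by (simp add: Suc_diff_le)
  finally show ?case by (simp add: algebra_simps)
qed simp

lemma halving_tail_lt:
  fixes d :: "nat \<Rightarrow> real"
  assumes pos: "\<And>j. 0 < d j" and halve: "\<And>j. 2 * d (Suc j) \<le> d j"
    and S: "finite S" "\<And>i. i \<in> S \<Longrightarrow> m < i"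
  shows "(\<Sum>i\<in>S. d i) < d m"
proof (cases "S = {}")
  case True
  then show ?thesis using pos by simp
next
  case False
  define N where "N = Max S"
  have "m \<le> N" using S Max_in[OF S(1) False] unfolding N_def by fastforce
  have "S \<subseteq> {m<..N}" using S unfolding N_def by auto
  then have "(\<Sum>i\<in>S. d i) \<le> (\<Sum>i\<in>{m<..N}. d i)"
    by (intro sum_mono2) (auto simp: less_imp_le[OF pos])
  also have "\<dots> \<le> d m * (1 - (1/2) ^ (N - m))" by (rule halving_interval_sum[where d=d, OF halve \<open>m \<le> N\<close>])
  also have "\<dots> < d m" using pos[of m] by simp
  finally show ?thesis .
qed

text \<open>Two different digit patterns on a finite index set, all of whose weights are at
  most 1/2, have weighted sums that do not differ by an integer: the first index where
  the patterns differ contributes a weight that dominates all later differences.\<close>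
lemma halving_subset_sums_not_int:
  fixes d :: "nat \<Rightarrow> real" and c c' :: "nat \<Rightarrow> bool"
  assumes pos: "\<And>j. 0 < d j" and halve: "\<And>j. 2 * d (Suc j) \<le> d j"
    and J: "finite J" "\<And>i. i \<in> J \<Longrightarrow> d i \<le> 1/2"
    and differ: "i0 \<in> J" "c i0 \<noteq> c' i0"
  shows "(\<Sum>i\<in>J. if c i then d i else 0) - (\<Sum>i\<in>J. if c' i then d i else 0) \<notin> \<int>"
proof
  define D where "D i = (if c i then d i else 0) - (if c' i then d i else 0)" for i
  define K where "K = {i\<in>J. c i \<noteq> c' i}"
  have K: "finite K" "K \<noteq> {}" using J differ unfolding K_def by auto
  define m where "m = Min K"
  have "m \<in> K" unfolding m_def using Min_in[OF K] .
  then have mJ: "m \<in> J" and "c m \<noteq> c' m" unfolding K_def by auto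
  then have Dm: "\<bar>D m\<bar> = d m" unfolding D_def using pos[of m] by (cases "c m") auto
  have below: "D i = 0" if "i \<in> J" "i < m" for i
    using that Min_le[OF K(1), of i] unfolding m_def K_def D_def by fastforce
  define L where "L = {i\<in>J. m < i}"
  have "J \<inter> {m..} = insert m L" using mJ unfolding L_def by auto
  have "(\<Sum>i\<in>J. D i) = (\<Sum>i\<in>J \<inter> {m..}. D i)"
    using J(1) below by (intro sum.mono_neutral_right) (auto simp: not_le)
  also have "\<dots> = D m + (\<Sum>i\<in>L. D i)"
    using \<open>J \<inter> {m..} = insert m L\<close> J(1) unfolding L_def by simp
  finally have split: "(\<Sum>i\<in>J. D i) = D m + (\<Sum>i\<in>L. D i)" .
  have D_bound: "\<bar>D i\<bar> \<le> d i" for i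
    using pos[of i] unfolding D_def by auto
  have "\<bar>\<Sum>i\<in>L. D i\<bar> \<le> (\<Sum>i\<in>L. \<bar>D i\<bar>)" by (rule sum_abs)
  also have "\<dots> \<le> (\<Sum>i\<in>L. d i)" using D_bound by (rule sum_mono)
  also have "\<dots> < d m" using J(1) unfolding L_def by (intro halving_tail_lt[where d=d, OF pos halve]) auto
  finally have "0 < \<bar>\<Sum>i\<in>J. D i\<bar>" "\<bar>\<Sum>i\<in>J. D i\<bar> < 1"
    using split Dm J(2)[OF mJ] by linarith+
  moreover assume "(\<Sum>i\<in>J. if c i then d i else 0) - (\<Sum>i\<in>J. if c' i then d i else 0) \<in> \<int>"
  then have "(\<Sum>i\<in>J. D i) \<in> \<int>" unfolding D_def by (simp add: sum_subtractf)
  ultimately show False using Ints_nonzero_abs_less1 by fastforce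
qed

lemma cis_eq_imp_diff_int:
  fixes u v :: real
  assumes "cis (2 * pi * u) = cis (2 * pi * v)"
  shows "u - v \<in> \<int>"
proof -
  have "cis (2 * pi * (u - v)) = 1"
    using assms by (simp add: right_diff_distrib cis_divide[symmetric])
  then have "cos (2 * pi * (u - v)) = 1" by (metis cis.sel(1) one_complex.sel(1))
  then obtain k :: int where "2 * pi * (u - v) = k * 2 * pi" using cos_one_2pi_int by auto
  then have "u - v = k" by simp
  then show ?thesis by simp
qed

lemma (in prob_space) sum_prob_distinct_values:
  fixes X :: "'a \<Rightarrow> 'b :: t1_space"
  assumes X: "X \<in> borel_measurable M" and C: "finite C" "inj_on v C"
  shows "(\<Sum>c\<in>C. prob {\<omega>\<in>space M. X \<omega> = v c}) \<le> 1"
proof -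
  have "(\<Sum>c\<in>C. prob {\<omega>\<in>space M. X \<omega> = v c}) = prob (\<Union>c\<in>C. {\<omega>\<in>space M. X \<omega> = v c})"
    using C X by (intro finite_measure_finite_Union[symmetric]) (auto simp: disjoint_family_on_def inj_on_def)
  also have "\<dots> \<le> 1" by (rule prob_le_1)
  finally show ?thesis .
qed

locale bernoulli_series =
  fixes p d :: "nat \<Rightarrow> real"
  assumes p_nonneg: "0 \<le> p j" and p_half: "p j \<le> 1/2"
    and d_pos: "0 < d j" and d_first: "d 0 \<le> 1" and d_halving: "2 * d (Suc j) \<le> d j"
begin

definition coin :: "nat \<Rightarrow> bool measure" where
  "coin j = measure_pmf (bernoulli_pmf (p j))"

definition Coins :: "(nat \<Rightarrow> bool) measure" where
  "Coins = PiM UNIV coin"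

definition digit :: "(nat \<Rightarrow> bool) \<Rightarrow> nat \<Rightarrow> real" where
  "digit \<omega> j = (if \<omega> j then d j else 0)"

definition phase :: "(nat \<Rightarrow> bool) \<Rightarrow> real" where
  "phase \<omega> = (\<Sum>j. digit \<omega> j)"

definition point :: "(nat \<Rightarrow> bool) \<Rightarrow> complex" where
  "point \<omega> = cis (2 * pi * phase \<omega>)"

definition \<sigma> :: "complex measure" where
  "\<sigma> = distr Coins borel point"

definition head :: "nat set \<Rightarrow> (nat \<Rightarrow> bool) \<Rightarrow> real" where
  "head J \<omega> = (\<Sum>i\<in>J. digit \<omega> i)"

definition tail :: "nat set \<Rightarrow> (nat \<Rightarrow> bool) \<Rightarrow> real" where
  "tail J \<omega> = (\<Sum>j. if j \<notin> J then digit \<omega> j else 0)"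

lemma d_geometric: "d j \<le> (1/2) ^ j"
  using halving_geometric[where d=d, OF d_halving, of 0 j] d_first by (simp add: mult_left_le_one_le order_trans)

lemma d_le_half: "1 \<le> j \<Longrightarrow> d j \<le> 1/2"
  using d_geometric[of j] power_decreasing[of 1 j "1/2::real"] by simp

lemma digit_bounds: "0 \<le> digit \<omega> j" "digit \<omega> j \<le> d j"
  using d_pos[of j] by (simp_all add: digit_def)

lemma summable_dominated: "summable g" if "\<And>j. norm (g j) \<le> d j" for g :: "nat \<Rightarrow> real"
  by (rule summable_comparison_test[where g="\<lambda>j. (1/2::real) ^ j"])
    (use that d_geometric in \<open>auto intro!: exI[of _ 0] intro: order_trans\<close>)

sublocale coins: product_prob_space coin UNIV
  unfolding product_prob_space_def product_sigma_finite_def product_prob_space_axioms_def coin_def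
  by (auto intro!: prob_space_measure_pmf prob_space_imp_sigma_finite)

lemma prob_space_Coins: "prob_space Coins"
  unfolding Coins_def by unfold_locales

lemma space_Coins [simp]: "space Coins = UNIV"
  unfolding Coins_def space_PiM coin_def by auto

lemma sets_coin [simp]: "sets (coin j) = UNIV"
  unfolding coin_def by simp

lemma coordinate_measurable [measurable]: "(\<lambda>\<omega>. \<omega> j) \<in> measurable Coins (count_space UNIV)"
proof -
  have "(\<lambda>\<omega>. \<omega> j) \<in> measurable Coins (coin j)"
    unfolding Coins_def by (rule measurable_component_singleton) simp
  then show ?thesis using measurable_cong_sets[of Coins Coins "coin j" "count_space UNIV"] by simp
qed

lemma digit_measurable [measurable]: "(\<lambda>\<omega>. digit \<omega> j) \<in> borel_measurable Coins"
  unfolding digit_def by measurable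

lemma tail_measurable [measurable]: "tail J \<in> borel_measurable Coins"
  unfolding tail_def[abs_def] by measurable

lemma point_measurable [measurable]: "point \<in> borel_measurable Coins"
  unfolding point_def[abs_def] phase_def cis_conv_exp by measurable

lemma norm_point [simp]: "norm (point \<omega>) = 1"
  unfolding point_def by simp

lemma phase_split:
  assumes "finite J"
  shows "phase \<omega> = head J \<omega> + tail J \<omega>"
proof -
  let ?inner = "\<lambda>j. if j \<in> J then digit \<omega> j else 0"
  let ?outer = "\<lambda>j. if j \<notin> J then digit \<omega> j else 0"
  have "summable ?inner" "summable ?outer"
    using digit_bounds[of \<omega>] less_imp_le[OF d_pos] by (auto intro!: summable_dominated)
  then have "phase \<omega> = suminf ?inner + suminf ?outer"
    unfolding phase_def by (subst suminf_add) (auto intro!: arg_cong[where f=suminf])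
  also have "suminf ?inner = head J \<omega>"
    unfolding head_def using assms by (subst suminf_finite[of J]) auto
  finally show ?thesis unfolding tail_def .
qed

definition cylinder :: "nat set \<Rightarrow> (nat \<Rightarrow> bool) \<Rightarrow> (nat \<Rightarrow> bool) set" where
  "cylinder J c = {\<omega>. \<forall>i\<in>J. \<omega> i = c i}"

lemma cylinder_sets [measurable]:
  assumes "finite J"
  shows "cylinder J c \<in> sets Coins"
proof -
  have "Measurable.pred Coins (\<lambda>\<omega>. \<forall>i\<in>J. \<omega> i = c i)"
    using assms by measurable
  then show ?thesis unfolding cylinder_def pred_def by simp
qed

lemma prob_cylinder:
  assumes "finite J"
  shows "measure Coins (cylinder J c) = (\<Prod>i\<in>J. if c i then p i else 1 - p i)"
proof -
  have nonneg: "0 \<le> (if c i then p i else 1 - p i)" for i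
    using p_nonneg[of i] p_half[of i] by auto
  have "emeasure (coin i) {c i} = ennreal (if c i then p i else 1 - p i)" for i
    using p_nonneg[of i] p_half[of i] unfolding coin_def by (auto simp: emeasure_pmf_single)
  then have "emeasure Coins (cylinder J c) = (\<Prod>i\<in>J. ennreal (if c i then p i else 1 - p i))"
    using coins.emeasure_PiM_Collect[of J "\<lambda>i. {c i}"] assms
    unfolding Coins_def cylinder_def by (simp add: space_PiM coin_def)
  also have "\<dots> = ennreal (\<Prod>i\<in>J. if c i then p i else 1 - p i)"
    using nonneg by (simp add: prod_ennreal)
  finally show ?thesis unfolding measure_def using nonneg by (simp add: prod_nonneg)
qed

lemma prob_heads: "measure Coins {\<omega>. \<omega> j} = p j"
  using prob_cylinder[of "{j}" "\<lambda>_. True"] unfolding cylinder_def by simp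

lemma \<sigma>_prob_on_T: "borel_prob_on_T \<sigma>"
proof -
  interpret prob_space Coins by (rule prob_space_Coins)
  have "emeasure \<sigma> circleT = emeasure Coins (point -` circleT \<inter> space Coins)"
    unfolding \<sigma>_def circleT_def by (simp add: emeasure_distr)
  also have "point -` circleT \<inter> space Coins = space Coins"
    unfolding circleT_def by auto
  finally show ?thesis
    unfolding borel_prob_on_T_def \<sigma>_def using emeasure_space_1 by (simp add: prob_space_distr)
qed

text \<open>If \<open>N\<close> is an integer multiple of each weight \<open>d i\<close>, \<open>i \<le> k\<close>,
  the head of the phase disappears from \<open>point \<omega> ^ N\<close>; as \<open>\<bar>cis x - 1\<bar> \<le> \<bar>x\<bar>\<close>, the
  coefficient at \<open>N\<close> is then within \<open>2\<pi>N\<close> times the mean tail of 1.\<close>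
lemma point_power:
  assumes int: "\<And>i. i \<le> k \<Longrightarrow> real N * d i \<in> \<int>"
  shows "point \<omega> ^ N = cis (2 * pi * (real N * tail {..k} \<omega>))"
proof -
  have "real N * head {..k} \<omega> = (\<Sum>i\<le>k. if \<omega> i then real N * d i else 0)"
    unfolding head_def digit_def sum_distrib_left by (rule sum.cong) auto
  also have "\<dots> \<in> \<int>" using int by (intro Ints_sum) auto
  finally have head_int: "real N * head {..k} \<omega> \<in> \<int>" .
  have "point \<omega> ^ N = cis (real N * (2 * pi * phase \<omega>))"
    unfolding point_def by (rule Complex.DeMoivre)
  also have "\<dots> = cis (2 * pi * (real N * tail {..k} \<omega>)) * cis (2 * pi * (real N * head {..k} \<omega>))"
    by (simp add: phase_split[of "{..k}"] cis_mult algebra_simps)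
  finally show ?thesis using head_int by simp
qed

definition tail_mean :: "nat set \<Rightarrow> real" where
  "tail_mean J = (\<Sum>j. if j \<notin> J then d j * p j else 0)"

lemma weighted_prob_bounds: "0 \<le> d j * p j" "d j * p j \<le> d j"
  using d_pos[of j] p_nonneg[of j] p_half[of j] by (simp_all add: mult_left_le)

lemma integral_digit: "integral\<^sup>L Coins (\<lambda>\<omega>. digit \<omega> j) = d j * p j"
proof -
  have "(\<lambda>\<omega>. digit \<omega> j) = (\<lambda>\<omega>. d j * indicator {\<omega>. \<omega> j} \<omega>)"
    by (auto simp: digit_def indicator_def)
  then show ?thesis using prob_heads by simp
qed

lemma tail_integrable: "integrable Coins (tail J)"
  and integral_tail: "integral\<^sup>L Coins (tail J) = tail_mean J"
proof -
  interpret prob_space Coins by (rule prob_space_Coins)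
  let ?f = "\<lambda>j \<omega>. if j \<notin> J then digit \<omega> j else 0"
  have bounds: "0 \<le> ?f j \<omega>" "?f j \<omega> \<le> d j" for j \<omega>
    using digit_bounds[of \<omega> j] d_pos[of j] by auto
  have integrable: "integrable Coins (?f j)" for j
    using bounds by (intro integrable_const_bound[where B="d j"]) auto
  have integral: "integral\<^sup>L Coins (?f j) = (if j \<notin> J then d j * p j else 0)" for j
    using integral_digit by simp
  have "\<bar>if j \<notin> J then d j * p j else 0\<bar> \<le> d j" for j
    using weighted_prob_bounds[of j] d_pos[of j] by auto
  then have "summable (\<lambda>j. if j \<notin> J then d j * p j else 0)"
    by (intro summable_dominated) simp
  moreover have "AE \<omega> in Coins. summable (\<lambda>j. norm (?f j \<omega>))"
    using bounds by (auto intro!: summable_dominated)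
  ultimately have "integrable Coins (\<lambda>\<omega>. \<Sum>j. ?f j \<omega>)"
    "integral\<^sup>L Coins (\<lambda>\<omega>. \<Sum>j. ?f j \<omega>) = (\<Sum>j. integral\<^sup>L Coins (?f j))"
    using integrable_suminf[OF integrable] integral_suminf[OF integrable] bounds(1) integral
    by simp_all
  then show "integrable Coins (tail J)" "integral\<^sup>L Coins (tail J) = tail_mean J"
    unfolding tail_def[abs_def] tail_mean_def integral by simp_all
qed

lemma fourier_tail_bound:
  assumes int: "\<And>i. i \<le> k \<Longrightarrow> real N * d i \<in> \<int>"
  shows "cmod (fourier_coeff \<sigma> N - 1) \<le> 2 * pi * real N * tail_mean {..k}"
proof -
  interpret prob_space Coins by (rule prob_space_Coins)
  let ?g = "\<lambda>\<omega>. cis (2 * pi * (real N * tail {..k} \<omega>))"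
  have g_measurable [measurable]: "?g \<in> borel_measurable Coins"
    unfolding cis_conv_exp by measurable
  have g_integrable: "integrable Coins ?g"
    by (intro integrable_const_bound[where B=1]) auto
  have "fourier_coeff \<sigma> N = integral\<^sup>L Coins (\<lambda>\<omega>. point \<omega> ^ N)"
    unfolding fourier_coeff_def \<sigma>_def by (rule integral_distr) auto
  also have "\<dots> = integral\<^sup>L Coins ?g" using point_power[OF int] by simp
  finally have "fourier_coeff \<sigma> N - 1 = integral\<^sup>L Coins (\<lambda>\<omega>. ?g \<omega> - 1)"
    using g_integrable prob_space by simp
  then have "cmod (fourier_coeff \<sigma> N - 1) \<le> integral\<^sup>L Coins (\<lambda>\<omega>. cmod (?g \<omega> - 1))"
    by simp
  also have "\<dots> \<le> integral\<^sup>L Coins (\<lambda>\<omega>. 2 * pi * real N * tail {..k} \<omega>)"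
  proof (rule integral_mono)
    show "integrable Coins (\<lambda>\<omega>. cmod (?g \<omega> - 1))"
      using g_integrable by (intro integrable_norm integrable_diff) auto
    show "integrable Coins (\<lambda>\<omega>. 2 * pi * real N * tail {..k} \<omega>)"
      using tail_integrable by simp
    fix \<omega>
    have "0 \<le> tail {..k} \<omega>"
      unfolding tail_def using digit_bounds[of \<omega>] less_imp_le[OF d_pos]
      by (intro suminf_nonneg summable_dominated) auto
    then show "cmod (?g \<omega> - 1) \<le> 2 * pi * real N * tail {..k} \<omega>"
      using iexp_approx1[of "2 * pi * (real N * tail {..k} \<omega>)" 0]
      by (simp add: cis_conv_exp abs_mult mult.assoc)
  qed
  also have "\<dots> = 2 * pi * real N * tail_mean {..k}"
    using integral_tail by simp
  finally show ?thesis .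
qed

lemma tail_mean_bound:
  assumes weights: "\<And>j. k \<le> j \<Longrightarrow> real N * d j \<le> (1/2) ^ (j - k)"
    and probs: "\<And>j. k \<le> j \<Longrightarrow> p j \<le> p k"
  shows "real N * tail_mean {..k} \<le> p k"
proof -
  let ?f = "\<lambda>j. if j \<notin> {..k} then real N * (d j * p j) else 0"
  let ?g = "\<lambda>j. if j \<notin> {..k} then p k * (1/2) ^ (j - k) else 0"
  have "(\<lambda>i. p k * ((1/2) * (1/2) ^ i)) sums (p k * ((1/2) * 2))"
    using geometric_sums[of "1/2::real"] by (intro sums_mult) simp_all
  then have "(\<lambda>i. ?g (i + Suc k)) sums p k" by simp
  then have g_sums: "?g sums p k" by (subst (asm) sums_zero_iff_shift) auto
  have "summable (\<lambda>j. if j \<notin> {..k} then d j * p j else 0)"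
    using weighted_prob_bounds less_imp_le[OF d_pos] by (intro summable_dominated) auto
  then have "real N * tail_mean {..k} = suminf ?f"
    unfolding tail_mean_def by (subst suminf_mult[symmetric]) (auto intro!: arg_cong[where f=suminf])
  also have "\<dots> \<le> suminf ?g"
  proof (rule suminf_le)
    fix j
    show "?f j \<le> ?g j"
    proof (cases "k < j")
      case True
      have "real N * d j * p j \<le> (1/2) ^ (j - k) * p k"
        using weights[of j] probs[of j] p_nonneg[of j] True by (intro mult_mono) auto
      then show ?thesis using True by (simp add: ac_simps)
    qed simp
    show "summable ?f"
      using \<open>summable _\<close> by (auto dest: summable_mult[of _ "real N"] simp: if_distrib cong: if_cong)
    show "summable ?g" using g_sums by (rule sums_summable)
  qed
  also have "\<dots> = p k" using g_sums by (rule sums_unique[symmetric])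
  finally show ?thesis .
qed

text \<open>Conditionally on the coins outside a finite set \<open>J \<subseteq> {1..}\<close>, the point is
  determined by the pattern of coins on \<open>J\<close>, and distinct patterns give distinct
  points; hence every atom has mass at most the largest pattern probability,
  \<open>\<Prod>i\<in>J. 1 - p i\<close>.\<close>
lemma head_patterns_distinct:
  assumes J: "finite J" "\<And>i. i \<in> J \<Longrightarrow> 1 \<le> i"
  shows "inj_on (\<lambda>c. cis (2 * pi * head J c)) (PiE J (\<lambda>_. UNIV))"
proof (rule inj_onI)
  fix c c' assume cc': "c \<in> PiE J (\<lambda>_. UNIV)" "c' \<in> PiE J (\<lambda>_. UNIV)"
    and same: "cis (2 * pi * head J c) = cis (2 * pi * head J c')"
  have int: "head J c - head J c' \<in> \<int>" using same by (rule cis_eq_imp_diff_int)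
  have "c i = c' i" if "i \<in> J" for i
  proof (rule ccontr)
    assume differ: "c i \<noteq> c' i"
    have "head J c - head J c' \<notin> \<int>"
      unfolding head_def digit_def
      by (rule halving_subset_sums_not_int[where d=d and c=c and c'=c',
            OF d_pos d_halving J(1) d_le_half[OF J(2)] that differ])
    then show False using int by simp
  qed
  then show "c = c'" using cc' by (intro PiE_ext)
qed

lemma coordinates_indep: "prob_space.indep_vars Coins coin (\<lambda>i \<omega>. \<omega> i) UNIV"
proof -
  interpret prob_space Coins by (rule prob_space_Coins)
  have rv: "\<And>i. random_variable (coin i) (\<lambda>\<omega>. \<omega> i)"
    unfolding Coins_def by (rule measurable_component_singleton) simp
  have "(\<lambda>x. \<lambda>i\<in>UNIV. x i) = (\<lambda>x::nat\<Rightarrow>bool. x)" by (auto simp: restrict_def)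
  then have "distr Coins (PiM UNIV coin) (\<lambda>x. \<lambda>i\<in>UNIV. x i) = Coins"
    unfolding Coins_def by (simp add: distr_id2)
  also have "\<dots> = PiM UNIV (\<lambda>i. distr Coins (coin i) (\<lambda>x. x i))"
    unfolding Coins_def using coins.PiM_component by simp
  finally show ?thesis
    using indep_vars_iff_distr_eq_PiM[where I=UNIV and M'=coin and X="\<lambda>i \<omega>. \<omega> i", OF UNIV_not_empty rv]
    by simp
qed

lemma tail_measurable_outside: "tail J \<in> borel_measurable (PiM (-J) coin)"
  unfolding tail_def[abs_def]
proof (rule borel_measurable_suminf)
  fix j
  show "(\<lambda>\<omega>. if j \<notin> J then digit \<omega> j else 0) \<in> borel_measurable (PiM (-J) coin)"
  proof (cases "j \<in> J")
    case False
    have "(\<lambda>\<omega>. \<omega> j) \<in> measurable (PiM (-J) coin) (coin j)"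
      using False by (intro measurable_component_singleton) simp
    then have "(\<lambda>\<omega>. \<omega> j) \<in> measurable (PiM (-J) coin) (count_space UNIV)"
      using measurable_cong_sets[of "PiM (-J) coin" "PiM (-J) coin" "coin j" "count_space UNIV"] by simp
    then show ?thesis using False unfolding digit_def by measurable
  qed simp
qed

lemma tail_restrict: "tail J (restrict \<omega> (-J)) = tail J \<omega>"
  unfolding tail_def digit_def by (rule arg_cong[where f=suminf]) (auto simp: restrict_def)

lemma prob_cylinder_tail:
  assumes J: "finite J" and A: "A \<in> sets borel"
  shows "measure Coins (cylinder J c \<inter> {\<omega>. tail J \<omega> \<in> A})
       = measure Coins (cylinder J c) * measure Coins {\<omega>. tail J \<omega> \<in> A}"
proof -
  interpret prob_space Coins by (rule prob_space_Coins)
  have indep: "indep_var (PiM J coin) (\<lambda>\<omega>. restrict \<omega> J) (PiM (-J) coin) (\<lambda>\<omega>. restrict \<omega> (-J))"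
    using indep_var_restrict[OF coordinates_indep, of J "-J"] by simp
  have pattern: "PiE J (\<lambda>i. {c i}) \<in> sets (PiM J coin)"
    using J by (intro sets_PiM_I_finite) auto
  have tail_event: "tail J -` A \<inter> space (PiM (-J) coin) \<in> sets (PiM (-J) coin)"
    using measurable_sets[OF tail_measurable_outside A] .
  have outside: "restrict \<omega> (-J) \<in> space (PiM (-J) coin)" for \<omega>
    by (simp add: space_PiM coin_def)
  show ?thesis
    using indep_varD[OF indep pattern tail_event] outside
    by (simp add: vimage_def restrict_PiE_iff tail_restrict cylinder_def Int_def Pi_def Ball_def conj_commute)
qed

text \<open>Writing \<open>point = cis (2\<pi> head) \<cdot> cis (2\<pi> tail)\<close>, the atom at \<open>x \<noteq> 0\<close> is covered by
  the events "pattern \<open>c\<close> on \<open>J\<close> and tail point \<open>x / cis (2\<pi> head J c)\<close>".\<close>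
lemma atom_cover:
  assumes J: "finite J"
  shows "{\<omega>. point \<omega> = x} \<subseteq> (\<Union>c\<in>PiE J (\<lambda>_. UNIV).
           cylinder J c \<inter> {\<omega>. tail J \<omega> \<in> {t. cis (2 * pi * t) = x / cis (2 * pi * head J c)}})"
proof
  fix \<omega> assume "\<omega> \<in> {\<omega>. point \<omega> = x}"
  then have "cis (2 * pi * head J \<omega>) * cis (2 * pi * tail J \<omega>) = x"
    unfolding point_def phase_split[OF J] by (simp add: distrib_left cis_mult)
  moreover have "head J (restrict \<omega> J) = head J \<omega>"
    unfolding head_def digit_def by (rule sum.cong) auto
  ultimately have "restrict \<omega> J \<in> PiE J (\<lambda>_. UNIV)" "\<omega> \<in> cylinder J (restrict \<omega> J)"
    "cis (2 * pi * tail J \<omega>) = x / cis (2 * pi * head J (restrict \<omega> J))"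
    unfolding cylinder_def by (auto simp: eq_divide_eq mult.commute)
  then show "\<omega> \<in> (\<Union>c\<in>PiE J (\<lambda>_. UNIV).
      cylinder J c \<inter> {\<omega>. tail J \<omega> \<in> {t. cis (2 * pi * t) = x / cis (2 * pi * head J c)}})"
    by blast
qed

lemma no_heads_nonneg: "0 \<le> (\<Prod>i\<in>J. 1 - p i)"
proof (intro prod_nonneg)
  show "0 \<le> 1 - p i" for i using p_half[of i] by simp
qed

text \<open>Since \<open>p i \<le> 1/2\<close>, the most likely pattern on \<open>J\<close> is "no heads".\<close>
lemma prob_cylinder_le:
  assumes "finite J"
  shows "measure Coins (cylinder J c) \<le> (\<Prod>i\<in>J. 1 - p i)"
  unfolding prob_cylinder[OF assms]
proof (intro prod_mono)
  show "0 \<le> (if c i then p i else 1 - p i) \<and> (if c i then p i else 1 - p i) \<le> 1 - p i" for i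
    using p_nonneg[of i] p_half[of i] by auto
qed

lemma prob_atom_le:
  assumes J: "finite J" "\<And>i. i \<in> J \<Longrightarrow> 1 \<le> i"
  shows "measure Coins {\<omega>. point \<omega> = x} \<le> (\<Prod>i\<in>J. 1 - p i)"
proof (cases "x = 0")
  case True
  have "point \<omega> \<noteq> 0" for \<omega> using norm_point[of \<omega>] by (auto simp del: norm_point)
  then have "{\<omega>. point \<omega> = x} = {}" using True by simp
  then show ?thesis using no_heads_nonneg by simp
next
  case False
  interpret prob_space Coins by (rule prob_space_Coins)
  define C where "C = PiE J (\<lambda>_. UNIV :: bool set)"
  define v where "v c = x / cis (2 * pi * head J c)" for c
  define E where "E c = {t. cis (2 * pi * t) = v c}" for c
  define Q where "Q = (\<Prod>i\<in>J. 1 - p i)"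
  have "finite C" unfolding C_def using J(1) by (simp add: finite_PiE)
  have "inj_on v C"
  proof (rule inj_onI)
    fix c c' assume "c \<in> C" "c' \<in> C" "v c = v c'"
    then show "c = c'"
      using inj_onD[OF head_patterns_distinct[OF J]] False unfolding C_def v_def by auto
  qed
  have E: "E c \<in> sets borel" for c
    unfolding E_def cis_conv_exp by measurable
  have events: "cylinder J c \<inter> {\<omega>. tail J \<omega> \<in> E c} \<in> sets Coins" for c
    using J(1) E by measurable
  have "measure Coins {\<omega>. point \<omega> = x} \<le> measure Coins (\<Union>c\<in>C. cylinder J c \<inter> {\<omega>. tail J \<omega> \<in> E c})"
    using atom_cover[OF J(1), of x] events \<open>finite C\<close> unfolding C_def E_def v_def
    by (intro finite_measure_mono sets.finite_UN) auto
  also have "\<dots> \<le> (\<Sum>c\<in>C. measure Coins (cylinder J c \<inter> {\<omega>. tail J \<omega> \<in> E c}))"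
    using events \<open>finite C\<close> by (intro finite_measure_subadditive_finite) auto
  also have "\<dots> = (\<Sum>c\<in>C. measure Coins (cylinder J c) * measure Coins {\<omega>. tail J \<omega> \<in> E c})"
    using prob_cylinder_tail[OF J(1) E] by simp
  also have "\<dots> \<le> (\<Sum>c\<in>C. Q * measure Coins {\<omega>. tail J \<omega> \<in> E c})"
    using prob_cylinder_le[OF J(1)] unfolding Q_def by (intro sum_mono mult_right_mono) auto
  also have "\<dots> = Q * (\<Sum>c\<in>C. prob {\<omega>\<in>space Coins. cis (2 * pi * tail J \<omega>) = v c})"
    unfolding E_def sum_distrib_left by simp
  also have "\<dots> \<le> Q * 1"
  proof (rule mult_left_mono)
    have "(\<lambda>\<omega>. cis (2 * pi * tail J \<omega>)) \<in> borel_measurable Coins"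
      unfolding cis_conv_exp by measurable
    then show "(\<Sum>c\<in>C. prob {\<omega>\<in>space Coins. cis (2 * pi * tail J \<omega>) = v c}) \<le> 1"
      using \<open>finite C\<close> \<open>inj_on v C\<close> by (rule sum_prob_distinct_values)
    show "0 \<le> Q" unfolding Q_def by (rule no_heads_nonneg)
  qed
  finally show ?thesis unfolding Q_def by simp
qed

text \<open>If \<open>\<Sum> p\<close> diverges, the products \<open>\<Prod>1\<le>i<m. 1 - p i \<le> exp (-\<Sum>1\<le>i<m. p i)\<close> tend to
  0, so \<open>\<sigma>\<close> has no atoms.\<close>
lemma \<sigma>_atomless:
  assumes diverges: "\<not> summable p"
  shows "atomless \<sigma>"
  unfolding atomless_def
proof
  fix x
  interpret prob_space Coins by (rule prob_space_Coins)
  define \<mu> where "\<mu> = measure Coins {\<omega>. point \<omega> = x}"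
  have atom_exp: "\<mu> \<le> exp (- (\<Sum>i\<in>{1..<m}. p i))" for m
  proof -
    have "\<mu> \<le> (\<Prod>i\<in>{1..<m}. 1 - p i)" unfolding \<mu>_def by (rule prob_atom_le) auto
    also have "\<dots> \<le> (\<Prod>i\<in>{1..<m}. exp (- p i))"
    proof (rule prod_mono)
      fix i
      show "0 \<le> 1 - p i \<and> 1 - p i \<le> exp (- p i)"
        using p_half[of i] exp_ge_add_one_self[of "- p i"] by simp
    qed
    also have "\<dots> = exp (\<Sum>i\<in>{1..<m}. - p i)" by (simp add: exp_sum)
    finally show ?thesis by (simp add: sum_negf)
  qed
  have bound: "(\<Sum>i\<in>{1..<m}. p i) \<le> - ln \<mu>" if "0 < \<mu>" for m
  proof -
    have "ln \<mu> \<le> ln (exp (- (\<Sum>i\<in>{1..<m}. p i)))"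
      using atom_exp[of m] that by (subst ln_le_cancel_iff) auto
    then show ?thesis by simp
  qed
  have "\<mu> = 0"
  proof (rule ccontr)
    assume "\<mu> \<noteq> 0"
    then have "0 < \<mu>" unfolding \<mu>_def by (simp add: zero_less_measure_iff)
    have "(\<Sum>i<m. p i) \<le> p 0 - ln \<mu>" for m
    proof -
      have "(\<Sum>i<m. p i) \<le> (\<Sum>i\<in>insert 0 {1..<m}. p i)"
        using p_nonneg by (intro sum_mono2) auto
      also have "\<dots> = p 0 + (\<Sum>i\<in>{1..<m}. p i)" by simp
      finally show ?thesis using bound[OF \<open>0 < \<mu>\<close>, of m] by simp
    qed
    then have "summable p" using p_nonneg by (intro summableI_nonneg_bounded) auto
    then show False using diverges by simp
  qed
  moreover have "emeasure \<sigma> {x} = emeasure Coins {\<omega>. point \<omega> = x}"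
    unfolding \<sigma>_def by (simp add: emeasure_distr vimage_def)
  ultimately show "emeasure \<sigma> {x} = 0" unfolding \<mu>_def by (simp add: emeasure_eq_measure)
qed

end

lemma not_summable_truncated:
  fixes a :: "nat \<Rightarrow> real"
  assumes "0 < b" "0 < c" "a \<longlonglongrightarrow> 0" "\<not> summable a"
  shows "\<not> summable (\<lambda>j. min b (c * a j))"
proof
  assume "summable (\<lambda>j. min b (c * a j))"
  moreover have "eventually (\<lambda>j. c * a j < b) sequentially"
    using assms(1,3) tendsto_mult_right_zero[OF assms(3), of c] by (simp add: order_tendstoD(2))
  then have "eventually (\<lambda>j. min b (c * a j) = c * a j) sequentially"
    by eventually_elim simp
  ultimately have "summable (\<lambda>j. c * a j)" using summable_cong by fastforce
  then show False using assms(2,4) by simp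
qed

theorem mainTheorem11:
  fixes n :: "nat \<Rightarrow> nat" and a :: "nat \<Rightarrow> real"
  assumes "strict_mono n"
    and "\<And>k. n k > 0"
    and "\<And>k. n k dvd n (Suc k)"
    and "\<And>k. a k > 0"
    and "decseq a"
    and "a \<longlonglongrightarrow> 0"
    and "\<not> summable a"
  shows "\<exists>\<sigma>. borel_prob_on_T \<sigma> \<and> atomless \<sigma> \<and>
           (\<forall>k. cmod (fourier_coeff \<sigma> (n k) - 1) \<le> a k)"
proof -
  define p where "p j = min (1/2) (1/7 * a j)" for j
  define d where "d j = 1 / real (n j)" for j
  note weights = dvd_chain_reciprocals[where n=n, OF assms(1-3), folded d_def]
  have p_decreasing: "p j \<le> p k" if "k \<le> j" for j k
    using \<open>decseq a\<close> that unfolding p_def decseq_def by fastforce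
  have p_small: "2 * pi * p k \<le> a k" for k
    using pi_approx assms(4)[of k] unfolding p_def by (simp add: min_def)
  interpret bernoulli_series p d
    using weights(1-3) assms(4) by unfold_locales (auto simp: p_def less_imp_le)
  have "cmod (fourier_coeff \<sigma> (n k) - 1) \<le> a k" for k
  proof -
    have "cmod (fourier_coeff \<sigma> (n k) - 1) \<le> 2 * pi * (real (n k) * tail_mean {..k})"
      using fourier_tail_bound[of k "n k"] weights(4) by (simp add: mult.assoc)
    also have "\<dots> \<le> 2 * pi * p k"
      using tail_mean_bound[OF weights(5) p_decreasing] by simp
    finally show ?thesis using p_small[of k] by linarith
  qed
  moreover have "\<not> summable p"
    unfolding p_def[abs_def] using assms(6,7) by (intro not_summable_truncated) auto
  ultimately show ?thesis using \<sigma>_prob_on_T \<sigma>_atomless by blast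
qed

end
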